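(* Let $n\in\mathbb{N}$ and $\alpha_1,\dots,\alpha_n>0$ pairwise distinct. Then $$\sigma_{ap}(W_{\chi_{\alpha_1}},\dots,W_{\chi_{\alpha_n}})=\overline{\{(\chi_{\alpha_1}(y),\dots,\chi_{\alpha_n}(y)):y\in\mathbb{R}\}}.$$
   Context: $\chi_\alpha(y)=e^{i\alpha y}$. $H^2(\mathbb{R})$ is the subspace of $L^2(\mathbb{R})$ (Lebesgue measure) of functions whose Fourier transform is supported in $[0,\infty)$, $P_m$ the projection onto it, and $W_f h=P_m(fh)$ for $f\in L^\infty(\mathbb{R})$; for $\alpha>0$, $W_{\chi_\alpha}$ is multiplication by $\chi_\alpha$ restricted to $H^2(\mathbb{R})$. The joint approximate point spectrum of commuting $A_1,\dots,A_n$ is the set of $\lambda\in\mathbb{C}^n$ with unit vectors $x_m$ such that $\|(A_j-\lambda_jI)x_m\|\to0$ for all $j$. *)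

theory Defs
  imports "HOL-Analysis.Analysis"
begin

definition chi :: "real \<Rightarrow> real \<Rightarrow> complex" where
  "chi \<alpha> y = exp (\<i> * complex_of_real (\<alpha> * y))"

definition L2 :: "(real \<Rightarrow> complex) set" where
  "L2 = {f. f \<in> borel_measurable lborel \<and> integrable lborel (\<lambda>x. (cmod (f x))^2)}"

definition L2norm :: "(real \<Rightarrow> complex) \<Rightarrow> real" where
  "L2norm f = sqrt (\<integral>x. (cmod (f x))^2 \<partial>lborel)"

definition fourier :: "(real \<Rightarrow> complex) \<Rightarrow> real \<Rightarrow> complex" where
  "fourier \<psi> \<xi> = (\<integral>x. \<psi> x * exp (- \<i> * complex_of_real (x * \<xi>)) \<partial>lborel)"

definition smooth_fun :: "(real \<Rightarrow> complex) \<Rightarrow> bool" where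
  "smooth_fun \<psi> \<longleftrightarrow> (\<exists>D :: nat \<Rightarrow> real \<Rightarrow> complex. D 0 = \<psi> \<and>
      (\<forall>k x. (D k has_vector_derivative D (Suc k) x) (at x)))"

definition test_neg :: "(real \<Rightarrow> complex) \<Rightarrow> bool" where
  "test_neg \<psi> \<longleftrightarrow> smooth_fun \<psi> \<and>
     (\<exists>a b. b < 0 \<and> (\<forall>x. x \<notin> {a..b} \<longrightarrow> \<psi> x = 0))"

text \<open>Hardy space H^2(R): L2 functions whose (distributional) Fourier transform
  is supported in [0,infinity), i.e. <hat f, psi> = <f, hat psi> = 0 for all
  test functions psi supported in (-infinity,0).\<close>
definition H2 :: "(real \<Rightarrow> complex) set" where
  "H2 = {f \<in> L2. \<forall>\<psi>. test_neg \<psi> \<longrightarrow> (\<integral>x. f x * fourier \<psi> x \<partial>lborel) = 0}"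

definition W_chi :: "real \<Rightarrow> (real \<Rightarrow> complex) \<Rightarrow> (real \<Rightarrow> complex)" where
  "W_chi \<alpha> h = (\<lambda>y. chi \<alpha> y * h y)"

definition joint_ap_spectrum ::
  "(real \<Rightarrow> complex) set \<Rightarrow> ('n \<Rightarrow> (real \<Rightarrow> complex) \<Rightarrow> (real \<Rightarrow> complex))
     \<Rightarrow> (complex ^ 'n) set" where
  "joint_ap_spectrum H A = {l. \<exists>x :: nat \<Rightarrow> real \<Rightarrow> complex.
      (\<forall>m. x m \<in> H \<and> L2norm (x m) = 1) \<and>
      (\<forall>j. (\<lambda>m. L2norm (\<lambda>y. A j (x m) y - l $ j * x m y)) \<longlonglongrightarrow> 0)}"

end

theory Submission
  imports Defs "HOL-Probability.Characteristic_Functions" "HOL-Probability.Sinc_Integral"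
    "HOL-Real_Asymp.Real_Asymp"
begin

(* Write Phi(y) = (chi_alpha_1(y), ..., chi_alpha_n(y)) and K = closure (range Phi).

   For any unit vector x in L2 one has the energy identity
       sum_j ||W_chi(alpha_j) x - l_j x||^2 = integral |Phi(y) - l|^2 |x(y)|^2 dy,
       so if l has distance e > 0 from range Phi the left side is at least e^2,
       and l cannot be an approximate joint eigenvalue.

   The Cauchy kernel c(u) = 1/(1 - i u) lies in H^2:
       its Fourier transform is supported on [0,oo).  We verify this against the
       distributional definition of H2 by writing c as a Laplace integral and
       damping the pairing with a Gaussian; Fubini and the explicit Gaussian
       Fourier transform show that the damped pairing tends to 0.  The rescaled
       translates sqrt(m/pi) c(m (y - y0)) are unit vectors of H^2 concentrating
       at y0, and along them W_chi(alpha) - chi_alpha(y0) tends to 0 as m -> oo.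
       Choosing points y0 with Phi(y0) -> l gives approximate eigenvectors for l. *)

lemma chi_norm [simp]: "norm (chi a y) = 1"
  unfolding chi_def by simp

lemma chi_meas [measurable]: "chi a \<in> borel_measurable borel"
  unfolding chi_def by measurable

lemma chi_zero: "chi a 0 = 1"
  unfolding chi_def by simp

lemma chi_isCont: "isCont (chi a) x"
  unfolding chi_def by (intro continuous_intros)

lemma chi_shift: "cmod (chi a (y0 + v) - chi a y0) = cmod (chi a v - 1)"
proof -
  have "chi a (y0 + v) = chi a y0 * chi a v"
    unfolding chi_def by (simp add: distrib_left exp_add[symmetric] algebra_simps)
  then have "chi a (y0 + v) - chi a y0 = chi a y0 * (chi a v - 1)"
    by (simp add: algebra_simps)
  then show ?thesis by (simp add: norm_mult)
qed

lemma norm_diff_sq_le: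
  fixes z1 z2 z3 :: "'a :: real_normed_vector"
  shows "(norm (z1 - z3))^2 \<le> 2 * (norm (z1 - z2))^2 + 2 * (norm (z2 - z3))^2"
proof -
  have "norm (z1 - z3) \<le> norm (z1 - z2) + norm (z2 - z3)"
    using norm_triangle_ineq[of "z1 - z2" "z2 - z3"] by simp
  then have "(norm (z1 - z3))^2 \<le> (norm (z1 - z2) + norm (z2 - z3))^2"
    by (intro power_mono) auto
  also have "\<dots> \<le> 2 * (norm (z1 - z2))^2 + 2 * (norm (z2 - z3))^2"
    by (smt (verit) sum_squares_bound power2_sum)
  finally show ?thesis .
qed

lemma integrable_bounded_weight:
  fixes f g :: "'a \<Rightarrow> real"
  assumes g: "integrable M g" and f: "f \<in> borel_measurable M" and bd: "\<And>x. \<bar>f x\<bar> \<le> C"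
  shows "integrable M (\<lambda>x. f x * g x)"
proof (rule Bochner_Integration.integrable_bound[OF integrable_mult_right[OF integrable_abs[OF g], of C]])
  show "(\<lambda>x. f x * g x) \<in> borel_measurable M" using f g by measurable
  show "AE x in M. norm (f x * g x) \<le> norm (C * \<bar>g x\<bar>)"
  proof (rule AE_I2)
    fix x
    have "\<bar>f x\<bar> \<le> \<bar>C\<bar>" using bd[of x] by linarith
    then show "norm (f x * g x) \<le> norm (C * \<bar>g x\<bar>)" by (simp add: abs_mult mult_right_mono)
  qed
qed

lemma L2norm_sq: "L2norm f ^ 2 = (\<integral>x. (cmod (f x))^2 \<partial>lborel)"
  unfolding L2norm_def by (simp add: integral_nonneg_AE)

lemma L2_D:
  assumes "f \<in> L2"
  shows "f \<in> borel_measurable lborel" "integrable lborel (\<lambda>x. (cmod (f x))^2)"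
  using assms unfolding L2_def by auto

lemma norm_vec_sq: "(norm (v :: complex ^ 'n))^2 = (\<Sum>j\<in>UNIV. (norm (v $ j))^2)"
  unfolding norm_vec_def L2_set_def by (simp add: sum_nonneg)

section \<open>The Cauchy kernel and the Lorentzian\<close>

definition cauchy_kernel :: "real \<Rightarrow> complex" where
  "cauchy_kernel u = 1 / (1 - \<i> * complex_of_real u)"

text \<open>The Lorentzian 1/(1+u^2) is the squared modulus of the Cauchy kernel.\<close>
definition lorentz :: "real \<Rightarrow> real" where
  "lorentz u = inverse (1 + u^2)"

lemma lorentz_pos: "lorentz u > 0"
  unfolding lorentz_def by (simp add: add_pos_nonneg)

lemma lorentz_meas [measurable]: "lorentz \<in> borel_measurable borel"
  unfolding lorentz_def by measurable

lemma lorentz_integrable: "integrable lborel lorentz"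
  and lorentz_integral: "(\<integral>u. lorentz u \<partial>lborel) = pi"
proof -
  have "set_integrable lborel (einterval (-\<infinity>) \<infinity>) (\<lambda>x. inverse (1 + x^2))"
    by (rule integrable_inverse_1_plus_square)
  then show "integrable lborel lorentz" unfolding lorentz_def set_integrable_def by simp
  have "(LBINT x=-\<infinity>..\<infinity>. inverse (1 + x^2)) = pi" by (rule LBINT_inverse_1_plus_square)
  then show "(\<integral>u. lorentz u \<partial>lborel) = pi"
    unfolding lorentz_def interval_lebesgue_integral_def set_lebesgue_integral_def by simp
qed

lemma norm_cauchy_kernel_sq: "(norm (cauchy_kernel u))^2 = lorentz u"
proof -
  have "(norm (1 - \<i> * complex_of_real u))^2 = 1 + u^2"
    by (simp add: cmod_power2)
  then show ?thesis
    by (simp add: cauchy_kernel_def lorentz_def norm_divide power_divide inverse_eq_divide)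
qed

lemma norm_cauchy_kernel_le: "norm (cauchy_kernel u) \<le> 1"
proof -
  have "lorentz u \<le> 1"
    unfolding lorentz_def by (simp add: add_pos_nonneg inverse_le_1_iff)
  then have "(norm (cauchy_kernel u))^2 \<le> 1^2" by (simp add: norm_cauchy_kernel_sq)
  then show ?thesis by (rule power2_le_imp_le) simp
qed

lemma cauchy_kernel_meas [measurable]: "cauchy_kernel \<in> borel_measurable borel"
proof (rule borel_measurable_continuous_onI)
  have "1 - \<i> * complex_of_real u \<noteq> 0" for u by (simp add: complex_eq_iff)
  then show "continuous_on UNIV cauchy_kernel"
    unfolding cauchy_kernel_def by (intro continuous_intros) auto
qed

lemma lorentz_affine:
  assumes m: "m > 0" and h: "integrable lborel (\<lambda>u. h u * lorentz u)"
  shows "integrable lborel (\<lambda>y. h (m*(y-y0)) * lorentz (m*(y-y0)))"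
    and "(\<integral>y. h (m*(y-y0)) * lorentz (m*(y-y0)) \<partial>lborel) = (1/m) * (\<integral>u. h u * lorentz u \<partial>lborel)"
proof -
  have "integrable lborel (\<lambda>x. h (-(m*y0) + m * x) * lorentz (-(m*y0) + m * x))"
    using lborel_integrable_real_affine[OF h, of m "-(m*y0)"] m by simp
  then show "integrable lborel (\<lambda>y. h (m*(y-y0)) * lorentz (m*(y-y0)))"
    by (simp add: algebra_simps)
  have "(\<integral>y. h (m*(y-y0)) * lorentz (m*(y-y0)) \<partial>lborel)
      = \<bar>1/m\<bar> *\<^sub>R (\<integral>x. h (m*((y0 + 1/m*x)-y0)) * lorentz (m*((y0 + 1/m*x)-y0)) \<partial>lborel)"
    by (rule lborel_integral_real_affine) (use m in simp)
  also have "\<dots> = (1/m) * (\<integral>u. h u * lorentz u \<partial>lborel)"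
    using m by (simp add: algebra_simps)
  finally show "(\<integral>y. h (m*(y-y0)) * lorentz (m*(y-y0)) \<partial>lborel) = (1/m) * (\<integral>u. h u * lorentz u \<partial>lborel)" .
qed

text \<open>Fourier transform of the Gaussian exp(-e x^2/2), from the characteristic function
  of the standard normal distribution.\<close>
lemma gaussian_fourier:
  assumes e: "e > 0"
  shows "(\<integral>x. exp (-(e*x^2)/2) *\<^sub>R iexp (x*u) \<partial>lborel)
       = complex_of_real (sqrt (2*pi/e) * exp (-(u^2)/(2*e)))"
proof -
  define t where "t = u / sqrt e"
  have se: "sqrt e > 0" using e by simp
  have "char std_normal_distribution t = complex_of_real (exp (- (t^2) / 2))"
    by (simp add: char_std_normal_distribution)
  moreover have "char std_normal_distribution t = (\<integral>z. std_normal_density z *\<^sub>R iexp (t * z) \<partial>lborel)"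
    unfolding char_def by (subst integral_density) (auto simp: normal_density_nonneg)
  ultimately have std: "(\<integral>z. std_normal_density z *\<^sub>R iexp (t * z) \<partial>lborel) = complex_of_real (exp (- (t^2) / 2))"
    by simp
  have "(\<integral>x. exp (-(e*x^2)/2) *\<^sub>R iexp (x*u) \<partial>lborel)
      = \<bar>1/sqrt e\<bar> *\<^sub>R (\<integral>z. exp (-(e*(0 + 1/sqrt e * z)^2)/2) *\<^sub>R iexp ((0 + 1/sqrt e * z)*u) \<partial>lborel)"
    by (rule lborel_integral_real_affine) (use se in auto)
  also have "(\<lambda>z. exp (-(e*(0 + 1/sqrt e * z)^2)/2) *\<^sub>R iexp ((0 + 1/sqrt e * z)*u))
      = (\<lambda>z. sqrt (2*pi) *\<^sub>R (std_normal_density z *\<^sub>R iexp (t * z)))"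
    using se e by (auto simp: std_normal_density_def t_def power_divide field_simps real_sqrt_power[symmetric])
  also have "\<bar>1/sqrt e\<bar> *\<^sub>R (\<integral>z. sqrt (2*pi) *\<^sub>R (std_normal_density z *\<^sub>R iexp (t * z)) \<partial>lborel)
      = (1/sqrt e * sqrt (2*pi)) *\<^sub>R complex_of_real (exp (- (t^2) / 2))"
    unfolding integral_scaleR_right std using se by simp
  also have "\<dots> = complex_of_real (sqrt (2*pi/e) * exp (-(u^2)/(2*e)))"
    using se e by (simp add: t_def power_divide real_sqrt_divide scaleR_conv_of_real field_simps)
  finally show ?thesis .
qed

lemma exp_neg_halfline:
  "integrable lborel (\<lambda>x. exp (-x) * indicator {0<..} x :: real)"
  "(\<integral>x. exp (-x) * indicator {0<..} x \<partial>lborel) = (1::real)"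
  using has_bochner_integral_I0i_power_exp_m[of 0] unfolding has_bochner_integral_iff by auto

text \<open>It exhibits c as a superposition of
  the functions exp(i u t), t > 0, i.e. as a function with spectrum in [0,oo).\<close>
lemma cauchy_kernel_laplace:
  "cauchy_kernel u
     = (\<integral>t. indicator {0<..} t *\<^sub>R exp ((\<i> * complex_of_real u - 1) * complex_of_real t) \<partial>lborel)"
proof -
  define w where "w = \<i> * complex_of_real u - 1"
  have w0: "w \<noteq> 0" unfolding w_def by (auto simp: complex_eq_iff)
  have si: "set_integrable lborel (einterval 0 \<infinity>) (\<lambda>t. exp (w * complex_of_real t))"
    unfolding set_integrable_def
  proof (rule Bochner_Integration.integrable_bound[OF exp_neg_halfline(1)])
    show "(\<lambda>x. indicat_real (einterval 0 \<infinity>) x *\<^sub>R exp (w * complex_of_real x)) \<in> borel_measurable lborel"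
      by measurable
    show "AE x in lborel. norm (indicat_real (einterval 0 \<infinity>) x *\<^sub>R exp (w * complex_of_real x))
        \<le> norm (exp (-x) * indicator {0<..} x :: real)"
      by (auto simp: w_def zero_ereal_def split: split_indicator)
  qed
  have "(LBINT t=0..\<infinity>. exp (w * complex_of_real t)) = 0 - exp (w * 0) / w"
  proof (rule interval_integral_FTC_integrable[where F="\<lambda>t. exp (w * complex_of_real t) / w"])
    show "(0::ereal) < \<infinity>" by simp
    show "((\<lambda>t. exp (w * complex_of_real t) / w) has_vector_derivative exp (w * complex_of_real x)) (at x)" for x
    proof -
      have "((\<lambda>z. exp (w * z) / w) has_field_derivative exp (w * complex_of_real x)) (at (complex_of_real x))"
        using w0 by (auto intro!: derivative_eq_intros)
      then show ?thesis by (rule has_vector_derivative_real_field)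
    qed
    show "isCont (\<lambda>t. exp (w * complex_of_real t)) x" for x by (intro continuous_intros)
    show "set_integrable lborel (einterval 0 \<infinity>) (\<lambda>t. exp (w * complex_of_real t))" by (rule si)
    show "(((\<lambda>t. exp (w * complex_of_real t) / w) \<circ> real_of_ereal) \<longlongrightarrow> exp (w * 0) / w) (at_right 0)"
      unfolding zero_ereal_def ereal_tendsto_simps
      using w0 by (auto intro!: tendsto_eq_intros)
    have "((\<lambda>t. exp (w * complex_of_real t) / w) \<longlongrightarrow> 0) at_top"
    proof (rule tendsto_norm_zero_cancel)
      have "((\<lambda>t. exp (-t) / norm w) \<longlongrightarrow> 0) at_top"
        by (intro tendsto_divide_zero filterlim_compose[OF exp_at_bot filterlim_uminus_at_bot_at_top])
      then show "((\<lambda>t. norm (exp (w * complex_of_real t) / w)) \<longlongrightarrow> 0) at_top"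
        by (simp add: w_def norm_divide)
    qed
    then show "(((\<lambda>t. exp (w * complex_of_real t) / w) \<circ> real_of_ereal) \<longlongrightarrow> 0) (at_left \<infinity>)"
      unfolding ereal_tendsto_simps by simp
  qed
  then have "(LBINT t=0..\<infinity>. exp (w * complex_of_real t)) = cauchy_kernel u"
    using w0 by (simp add: w_def cauchy_kernel_def field_simps)
  then show ?thesis
    by (simp add: interval_lebesgue_integral_0_infty set_lebesgue_integral_def w_def)
qed

lemma integrable_product_bound:
  fixes H :: "real \<times> real \<Rightarrow> complex"
  assumes H: "H \<in> borel_measurable (lborel \<Otimes>\<^sub>M lborel)"
    and p: "integrable lborel p" and q: "integrable lborel q"
    and bd: "\<And>x y. norm (H (x,y)) \<le> p x * q y"
  shows "integrable (lborel \<Otimes>\<^sub>M lborel) H"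
proof (rule Bochner_Integration.integrable_bound[OF _ H])
  have pm[measurable]: "p \<in> borel_measurable lborel" using p by auto
  have qm[measurable]: "q \<in> borel_measurable lborel" using q by auto
  show "integrable (lborel \<Otimes>\<^sub>M lborel) (\<lambda>z. p (fst z) * q (snd z))"
  proof (rule lborel_pair.Fubini_integrable)
    show "(\<lambda>z. p (fst z) * q (snd z)) \<in> borel_measurable (lborel \<Otimes>\<^sub>M lborel)" by measurable
    have "integrable lborel (\<lambda>x. norm (p x) * (\<integral>y. norm (q y) \<partial>lborel))"
      using p by (intro integrable_mult_left) auto
    then show "integrable lborel (\<lambda>x. \<integral>y. norm (p (fst (x, y)) * q (snd (x, y))) \<partial>lborel)"
      by (simp add: abs_mult)
    show "AE x in lborel. integrable lborel (\<lambda>y. p (fst (x, y)) * q (snd (x, y)))"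
      using q by auto
  qed
  show "AE z in lborel \<Otimes>\<^sub>M lborel. norm (H z) \<le> norm (p (fst z) * q (snd z))"
    using bd by (auto intro!: AE_I2 order_trans[OF _ abs_ge_self] simp: split_paired_all)
qed

definition gauss :: "real \<Rightarrow> real \<Rightarrow> real" where
  "gauss e x = exp (-(e*x^2)/2)"

lemma gauss_pos: "gauss e x > 0"
  by (simp add: gauss_def)

lemma gauss_integrable:
  assumes "e > 0"
  shows "integrable lborel (gauss e)"
proof -
  have "gauss e = (\<lambda>x. sqrt (2*pi/e) * normal_density 0 (1/sqrt e) x)"
    using assms by (auto simp: gauss_def normal_density_def power_divide real_sqrt_divide field_simps real_sqrt_mult)
  moreover have "integrable lborel (normal_density 0 (1/sqrt e))"
    using assms by (intro integrable_normal_density) simp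
  ultimately show ?thesis by auto
qed

lemma gauss_damping_tendsto:
  fixes g :: "real \<Rightarrow> complex"
  assumes g: "integrable lborel g"
  shows "(\<lambda>n. \<integral>x. g x * complex_of_real (gauss (1/real (Suc n)) x) \<partial>lborel) \<longlonglongrightarrow> (\<integral>x. g x \<partial>lborel)"
proof (rule integral_dominated_convergence[where w="\<lambda>x. norm (g x)"])
  have gm[measurable]: "g \<in> borel_measurable lborel" using g by auto
  show "g \<in> borel_measurable lborel" by (rule gm)
  show "(\<lambda>x. g x * complex_of_real (gauss (1/real (Suc n)) x)) \<in> borel_measurable lborel" for n
    unfolding gauss_def by measurable
  show "integrable lborel (\<lambda>x. norm (g x))" using g by simp
  show "AE x in lborel. (\<lambda>n. g x * complex_of_real (gauss (1/real (Suc n)) x)) \<longlonglongrightarrow> g x"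
  proof (rule AE_I2)
    fix x
    have "(\<lambda>n. gauss (1/real (Suc n)) x) \<longlonglongrightarrow> exp (-(0*x^2)/2)"
      unfolding gauss_def by (intro tendsto_intros LIMSEQ_inverse_real_of_nat[unfolded inverse_eq_divide]) simp_all
    then have "(\<lambda>n. complex_of_real (gauss (1/real (Suc n)) x)) \<longlonglongrightarrow> 1"
      using tendsto_of_real[where 'a=complex] by fastforce
    then show "(\<lambda>n. g x * complex_of_real (gauss (1/real (Suc n)) x)) \<longlonglongrightarrow> g x"
      using tendsto_mult[OF tendsto_const] by fastforce
  qed
  show "AE x in lborel. norm (g x * complex_of_real (gauss (1/real (Suc n)) x)) \<le> norm (g x)" for n
  proof (intro AE_I2)
    fix x
    have "\<bar>gauss (1/real (Suc n)) x\<bar> \<le> 1" using gauss_pos[of "1/real (Suc n)" x] by (simp add: gauss_def)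
    then show "norm (g x * complex_of_real (gauss (1/real (Suc n)) x)) \<le> norm (g x)"
      unfolding norm_mult norm_of_real by (intro mult_left_le) simp_all
  qed
qed

lemma gauss_tail_vanishes:
  assumes "b < 0"
  shows "(\<lambda>n. sqrt (2*pi/(1/real (Suc n))) * exp (-(b^2)/(2*(1/real (Suc n))))) \<longlonglongrightarrow> 0"
proof -
  have c: "b^2/2 > 0" using assms by simp
  have "((\<lambda>x. sqrt (2*pi*x) * exp (-(b^2/2)*x)) \<longlongrightarrow> 0) at_top"
    using c by real_asymp
  then have "(\<lambda>n. sqrt (2*pi*real (Suc n)) * exp (-(b^2/2)*real (Suc n))) \<longlonglongrightarrow> 0"
    by (rule filterlim_compose) (intro filterlim_compose[OF filterlim_real_sequentially] filterlim_Suc)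
  moreover have "sqrt (2*pi/(1/real (Suc n))) * exp (-(b^2)/(2*(1/real (Suc n))))
      = sqrt (2*pi*real (Suc n)) * exp (-(b^2/2)*real (Suc n))" for n
    by (simp add: field_simps)
  ultimately show ?thesis by simp
qed

section \<open>The Cauchy kernel lies in the Hardy space\<close>

definition laplace_gauss_profile :: "real \<Rightarrow> real \<Rightarrow> real \<Rightarrow> real \<Rightarrow> real \<Rightarrow> complex" where
  "laplace_gauss_profile m y0 e s t = indicator {0<..} t *\<^sub>R
     (exp (-(1 + \<i> * complex_of_real (m*y0)) * complex_of_real t)
      * complex_of_real (sqrt (2*pi/e) * exp (-((m*t-s)^2)/(2*e))))"

text \<open>Damped Fourier transform of a rescaled translate of the Cauchy kernel: inserting the
  Laplace representation and exchanging the integrals (Fubini) leaves the Gaussian Fourier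
  transform inside.\<close>
lemma cauchy_damped_transform:
  assumes e: "e > 0"
  shows "(\<integral>x. cauchy_kernel (m*(x-y0)) * exp (-(\<i> * complex_of_real (x * s)))
              * complex_of_real (gauss e x) \<partial>lborel)
       = (\<integral>t. laplace_gauss_profile m y0 e s t \<partial>lborel)"
proof -
  define J where "J x t = indicator {0<..} t *\<^sub>R (exp ((\<i> * complex_of_real (m*(x-y0)) - 1) * complex_of_real t)
      * exp (-(\<i> * complex_of_real (x * s))) * complex_of_real (gauss e x))" for x t
  have laplace: "cauchy_kernel (m*(x-y0)) * exp (-(\<i> * complex_of_real (x * s))) * complex_of_real (gauss e x)
      = (\<integral>t. J x t \<partial>lborel)" for x
    unfolding J_def cauchy_kernel_laplace integral_mult_left_zero[symmetric]
    by (simp add: mult.assoc)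
  have J_integrable: "integrable (lborel \<Otimes>\<^sub>M lborel) (\<lambda>(x,t). J x t)"
  proof (rule integrable_product_bound[OF _ gauss_integrable[OF e] exp_neg_halfline(1)])
    show "(\<lambda>(x,t). J x t) \<in> borel_measurable (lborel \<Otimes>\<^sub>M lborel)"
      unfolding J_def gauss_def by measurable
    fix x t
    have "norm ((\<lambda>(x,t). J x t) (x,t)) = gauss e x * (exp (-t) * indicator {0<..} t)"
      using gauss_pos[of e x] unfolding J_def split norm_scaleR norm_mult norm_exp_eq_Re norm_of_real
      by (simp split: split_indicator)
    then show "norm ((\<lambda>(x,t). J x t) (x,t)) \<le> gauss e x * (exp (-t) * indicator {0<..} t)" by simp
  qed
  have inner: "(\<integral>x. J x t \<partial>lborel) = laplace_gauss_profile m y0 e s t" for t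
  proof -
    have "J x t = indicator {0<..} t *\<^sub>R (exp (-(1 + \<i> * complex_of_real (m*y0)) * complex_of_real t)
        * (exp (-(e*x^2)/2) *\<^sub>R iexp (x*(m*t-s))))" for x
    proof -
      have "exp ((\<i> * complex_of_real (m*(x-y0)) - 1) * complex_of_real t) * exp (-(\<i> * complex_of_real (x * s)))
         = exp (-(1 + \<i> * complex_of_real (m*y0)) * complex_of_real t) * exp (\<i> * complex_of_real (x*(m*t-s)))"
        unfolding exp_add[symmetric] by (simp add: algebra_simps)
      then show ?thesis unfolding J_def gauss_def
        by (simp add: scaleR_conv_of_real mult.assoc mult.left_commute)
    qed
    then have "(\<integral>x. J x t \<partial>lborel) = indicator {0<..} t *\<^sub>R (exp (-(1 + \<i> * complex_of_real (m*y0)) * complex_of_real t)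
        * (\<integral>x. exp (-(e*x^2)/2) *\<^sub>R iexp (x*(m*t-s)) \<partial>lborel))"
      by (simp only: integral_scaleR_right integral_mult_right_zero)
    then show ?thesis unfolding laplace_gauss_profile_def gaussian_fourier[OF e] .
  qed
  show ?thesis
    unfolding laplace using lborel_pair.Fubini_integral[OF J_integrable] inner by simp
qed

text \<open>At a non-positive frequency s all centres satisfy m t - s \<ge> -s \<ge> 0, so the damped
  transform is at most the Gaussian value at s.\<close>
lemma cauchy_damped_transform_bound:
  assumes m: "m > 0" and e: "e > 0" and s: "s \<le> 0"
  shows "norm (\<integral>x. cauchy_kernel (m*(x-y0)) * exp (-(\<i> * complex_of_real (x * s)))
                   * complex_of_real (gauss e x) \<partial>lborel)
           \<le> sqrt (2*pi/e) * exp (-(s^2)/(2*e))"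
proof -
  define C0 where "C0 = sqrt (2*pi/e) * exp (-(s^2)/(2*e))"
  define E where "E = laplace_gauss_profile m y0 e s"
  have E_bound: "norm (E t) \<le> exp (-t) * indicator {0<..} t * C0" for t
  proof (cases "t > 0")
    case True
    have "0 \<le> -s" "-s \<le> m*t - s" using True m s by simp_all
    then have "s^2 \<le> (m*t - s)^2" by (metis power_mono power2_minus)
    then have "exp (-((m*t-s)^2)/(2*e)) \<le> exp (-(s^2)/(2*e))" using e by (simp add: divide_right_mono)
    moreover have "norm (E t) = exp (-t) * (sqrt (2*pi/e) * exp (-((m*t-s)^2)/(2*e)))"
      using True e unfolding E_def laplace_gauss_profile_def norm_scaleR norm_mult norm_exp_eq_Re norm_of_real by (simp add: abs_mult)
    ultimately show ?thesis using True e unfolding C0_def by simp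
  next
    case False then show ?thesis by (simp add: E_def laplace_gauss_profile_def)
  qed
  have E_integrable: "integrable lborel E"
  proof (rule Bochner_Integration.integrable_bound[where f="\<lambda>x. C0 * (exp (-x) * indicator {0<..} x)"])
    show "integrable lborel (\<lambda>x. C0 * (exp (-x) * indicator {0<..} x))" using exp_neg_halfline(1) by simp
    show "E \<in> borel_measurable lborel" unfolding E_def laplace_gauss_profile_def by measurable
    show "AE x in lborel. norm (E x) \<le> norm (C0 * (exp (- x) * indicator {0<..} x))"
      using E_bound by (auto intro!: AE_I2 order_trans[OF _ abs_ge_self] simp: mult_ac)
  qed
  have "norm (\<integral>t. E t \<partial>lborel) \<le> (\<integral>t. exp (-t) * indicator {0<..} t * C0 \<partial>lborel)"
    by (rule Bochner_Integration.integral_norm_bound_integral[OF E_integrable]) (use E_bound exp_neg_halfline in auto)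
  also have "\<dots> = C0" using exp_neg_halfline by simp
  finally show ?thesis unfolding cauchy_damped_transform[OF e] C0_def E_def[symmetric] .
qed

lemma test_neg_props:
  assumes "test_neg \<psi>"
  obtains a b where "b < 0" "\<And>x. x \<notin> {a..b} \<Longrightarrow> \<psi> x = 0"
    "\<psi> \<in> borel_measurable borel" "integrable lborel \<psi>"
proof -
  from assms obtain D a b where D: "D 0 = \<psi>" "\<And>k x. (D k has_vector_derivative D (Suc k) x) (at x)"
    and b: "b < 0" and z: "\<And>x. x \<notin> {a..b} \<Longrightarrow> \<psi> x = 0"
    unfolding test_neg_def smooth_fun_def by blast
  have c: "continuous_on UNIV \<psi>"
    using D by (metis continuous_at_imp_continuous_on has_vector_derivative_continuous)
  have "set_integrable lborel {a..b} \<psi>"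
    by (rule borel_integrable_atLeastAtMost') (rule continuous_on_subset[OF c], auto)
  moreover have "(\<lambda>x. indicator {a..b} x *\<^sub>R \<psi> x) = \<psi>"
    using z by (auto split: split_indicator)
  ultimately have "integrable lborel \<psi>" unfolding set_integrable_def by simp
  with b z borel_measurable_continuous_onI[OF c] show ?thesis by (intro that) auto
qed

text \<open>Damped pairing of the Cauchy kernel with the Fourier transform of a function
  supported in [a,b], b < 0: Fubini reduces it to the previous bound.\<close>
lemma cauchy_damped_pairing_bound:
  fixes \<psi> :: "real \<Rightarrow> complex"
  assumes m: "m > 0" and e: "e > 0" and b: "b < 0"
    and supp: "\<And>x. x \<notin> {a..b} \<Longrightarrow> \<psi> x = 0"
    and \<psi>m: "\<psi> \<in> borel_measurable borel" and \<psi>i: "integrable lborel \<psi>"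
  shows "norm (\<integral>x. cauchy_kernel (m*(x-y0)) * fourier \<psi> x * complex_of_real (gauss e x) \<partial>lborel)
           \<le> (\<integral>s. norm (\<psi> s) \<partial>lborel) * (sqrt (2*pi/e) * exp (-(b^2)/(2*e)))"
proof -
  note [measurable] = \<psi>m
  define F where "F x = cauchy_kernel (m*(x-y0))" for x
  define C where "C = sqrt (2*pi/e) * exp (-(b^2)/(2*e))"
  define G where "G s = (\<integral>x. F x * exp (-(\<i> * complex_of_real (x * s))) * complex_of_real (gauss e x) \<partial>lborel)" for s
  define K where "K x s = F x * \<psi> s * exp (-(\<i> * complex_of_real (x * s))) * complex_of_real (gauss e x)" for x s
  have expand: "F x * fourier \<psi> x * complex_of_real (gauss e x) = (\<integral>s. K x s \<partial>lborel)" for x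
    unfolding fourier_def K_def integral_mult_left_zero[symmetric] integral_mult_right_zero[symmetric]
    by (rule Bochner_Integration.integral_cong) (simp_all add: mult_ac)
  have K_integrable: "integrable (lborel \<Otimes>\<^sub>M lborel) (\<lambda>(x,s). K x s)"
  proof (rule integrable_product_bound[OF _ gauss_integrable[OF e]])
    show "(\<lambda>(x,s). K x s) \<in> borel_measurable (lborel \<Otimes>\<^sub>M lborel)"
      unfolding K_def F_def gauss_def by measurable
    show "integrable lborel (\<lambda>s. norm (\<psi> s))" using \<psi>i by simp
    fix x s
    have "norm (K x s) = norm (F x) * norm (\<psi> s) * gauss e x"
      unfolding K_def norm_mult norm_of_real using gauss_pos[of e x] by simp
    also have "\<dots> \<le> gauss e x * norm (\<psi> s)"
      using norm_cauchy_kernel_le[of "m*(x-y0)"] gauss_pos[of e x] unfolding F_def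
      by (simp add: mult_right_le_one_le mult.commute mult_left_le_one_le)
    finally show "norm ((\<lambda>(x,s). K x s) (x,s)) \<le> gauss e x * norm (\<psi> s)" by simp
  qed
  have inner: "(\<integral>x. K x s \<partial>lborel) = \<psi> s * G s" for s
    unfolding G_def K_def integral_mult_right_zero[symmetric]
    by (rule Bochner_Integration.integral_cong) (simp_all add: mult_ac)
  have fubini: "(\<integral>x. F x * fourier \<psi> x * complex_of_real (gauss e x) \<partial>lborel) = (\<integral>s. \<psi> s * G s \<partial>lborel)"
    unfolding expand using lborel_pair.Fubini_integral[OF K_integrable] inner by simp
  have pointwise: "norm (\<psi> s * G s) \<le> norm (\<psi> s) * C" for s
  proof (cases "s \<in> {a..b}")
    case True
    have "(-b)^2 \<le> (-s)^2" using True b by (intro power_mono) auto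
    then have "s \<le> 0" "b^2 \<le> s^2" using True b by simp_all
    then have "norm (G s) \<le> C"
      using cauchy_damped_transform_bound[OF m e, of s y0] e unfolding G_def C_def F_def
      by (smt (verit) divide_right_mono exp_le_cancel_iff mult_left_mono real_sqrt_ge_zero
          zero_le_divide_iff pi_ge_zero)
    then show ?thesis by (simp add: norm_mult mult_left_mono)
  next
    case False then show ?thesis using supp by simp
  qed
  show ?thesis
  proof (cases "integrable lborel (\<lambda>s. \<psi> s * G s)")
    case True
    have "norm (\<integral>s. \<psi> s * G s \<partial>lborel) \<le> (\<integral>s. norm (\<psi> s) * C \<partial>lborel)"
      by (rule Bochner_Integration.integral_norm_bound_integral[OF True]) (use \<psi>i pointwise in auto)
    then show ?thesis unfolding fubini[unfolded F_def] C_def by simp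
  next
    case False
    have "C \<ge> 0" unfolding C_def using e by simp
    then show ?thesis using False unfolding fubini[unfolded F_def] C_def
      by (simp add: not_integrable_integral_eq)
  qed
qed

text \<open>The Cauchy kernel is orthogonal to the Fourier transforms of test functions supported in
  (-oo,0): the damped pairings tend to both the pairing and to 0.\<close>
lemma cauchy_kernel_orthogonal:
  assumes m: "m > 0" and \<psi>: "test_neg \<psi>"
  shows "(\<integral>x. cauchy_kernel (m*(x-y0)) * fourier \<psi> x \<partial>lborel) = 0"
proof (cases "integrable lborel (\<lambda>x. cauchy_kernel (m*(x-y0)) * fourier \<psi> x)")
  case False then show ?thesis by (simp add: not_integrable_integral_eq)
next
  case True
  obtain a b where b: "b < 0" and supp: "\<And>x. x \<notin> {a..b} \<Longrightarrow> \<psi> x = 0"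
    and \<psi>m: "\<psi> \<in> borel_measurable borel" and \<psi>i: "integrable lborel \<psi>"
    using test_neg_props[OF \<psi>] by blast
  define T where "T n = (\<integral>x. cauchy_kernel (m*(x-y0)) * fourier \<psi> x * complex_of_real (gauss (1/real (Suc n)) x) \<partial>lborel)" for n
  have to_pairing: "T \<longlonglongrightarrow> (\<integral>x. cauchy_kernel (m*(x-y0)) * fourier \<psi> x \<partial>lborel)"
    unfolding T_def by (rule gauss_damping_tendsto[OF True])
  have to_zero: "T \<longlonglongrightarrow> 0"
  proof (rule Lim_null_comparison)
    define P where "P = (\<integral>s. norm (\<psi> s) \<partial>lborel)"
    show "\<forall>\<^sub>F n in sequentially. norm (T n) \<le> P * (sqrt (2*pi/(1/real (Suc n))) * exp (-(b^2)/(2*(1/real (Suc n)))))"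
    proof (intro always_eventually allI)
      fix n
      show "norm (T n) \<le> P * (sqrt (2*pi/(1/real (Suc n))) * exp (-(b^2)/(2*(1/real (Suc n)))))"
        unfolding T_def P_def by (rule cauchy_damped_pairing_bound[OF m _ b supp \<psi>m \<psi>i]) simp
    qed
    show "(\<lambda>n. P * (sqrt (2*pi/(1/real (Suc n))) * exp (-(b^2)/(2*(1/real (Suc n)))))) \<longlonglongrightarrow> 0"
      using tendsto_mult[OF tendsto_const gauss_tail_vanishes[OF b], of P] by simp
  qed
  show ?thesis using LIMSEQ_unique[OF to_pairing to_zero] .
qed

lemma cauchy_kernel_in_H2:
  assumes m: "m > 0"
  shows "(\<lambda>x. c * cauchy_kernel (m*(x-y0))) \<in> H2"
proof -
  have "integrable lborel (\<lambda>y. (\<lambda>_. (cmod c)^2) (m*(y-y0)) * lorentz (m*(y-y0)))"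
    by (rule lorentz_affine(1)[OF m]) (use lorentz_integrable in simp)
  then have "integrable lborel (\<lambda>x. (cmod (c * cauchy_kernel (m*(x-y0))))^2)"
    by (simp add: norm_mult power_mult_distrib norm_cauchy_kernel_sq)
  moreover have "(\<lambda>x. c * cauchy_kernel (m*(x-y0))) \<in> borel_measurable lborel" by measurable
  moreover have "(\<integral>x. c * cauchy_kernel (m*(x-y0)) * fourier \<psi> x \<partial>lborel) = 0" if "test_neg \<psi>" for \<psi>
    using cauchy_kernel_orthogonal[OF m that, of y0] by (simp add: mult.assoc)
  ultimately show ?thesis unfolding H2_def L2_def by auto
qed

section \<open>The joint approximate point spectrum lies in the closed range of the symbol\<close>

lemma mult_defect_sq:
  assumes x: "x \<in> L2"
  shows "integrable lborel (\<lambda>y. (cmod (chi a y - c))^2 * (cmod (x y))^2)"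
    and "L2norm (\<lambda>y. W_chi a x y - c * x y) ^ 2 = (\<integral>y. (cmod (chi a y - c))^2 * (cmod (x y))^2 \<partial>lborel)"
proof -
  note [measurable] = L2_D(1)[OF x]
  have "\<bar>(cmod (chi a y - c))^2\<bar> \<le> (1 + cmod c)^2" for y
    using norm_triangle_ineq4[of "chi a y" c] by (simp add: power_mono)
  then show "integrable lborel (\<lambda>y. (cmod (chi a y - c))^2 * (cmod (x y))^2)"
    by (intro integrable_bounded_weight[OF L2_D(2)[OF x], where C="(1 + cmod c)^2"]) auto
  show "L2norm (\<lambda>y. W_chi a x y - c * x y) ^ 2 = (\<integral>y. (cmod (chi a y - c))^2 * (cmod (x y))^2 \<partial>lborel)"
    unfolding L2norm_sq W_chi_def
    by (rule Bochner_Integration.integral_cong) (simp_all add: left_diff_distrib[symmetric] norm_mult power_mult_distrib)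
qed

lemma joint_defect_energy:
  fixes \<alpha> :: "real ^ 'n" and l :: "complex ^ 'n"
  assumes x: "x \<in> L2"
  shows "(\<Sum>j\<in>UNIV. L2norm (\<lambda>y. W_chi (\<alpha> $ j) x y - l $ j * x y) ^ 2)
       = (\<integral>y. (dist (\<chi> j. chi (\<alpha> $ j) y) l)^2 * (cmod (x y))^2 \<partial>lborel)"
proof -
  have "(\<Sum>j\<in>UNIV. L2norm (\<lambda>y. W_chi (\<alpha> $ j) x y - l $ j * x y) ^ 2)
      = (\<integral>y. (\<Sum>j\<in>UNIV. (cmod (chi (\<alpha> $ j) y - l $ j))^2 * (cmod (x y))^2) \<partial>lborel)"
    unfolding mult_defect_sq(2)[OF x] using mult_defect_sq(1)[OF x]
    by (subst Bochner_Integration.integral_sum) auto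
  also have "\<dots> = (\<integral>y. (dist (\<chi> j. chi (\<alpha> $ j) y) l)^2 * (cmod (x y))^2 \<partial>lborel)"
    unfolding dist_norm norm_vec_sq sum_distrib_right by simp
  finally show ?thesis .
qed

lemma ap_spectrum_subset_closure:
  fixes \<alpha> :: "real ^ 'n"
  assumes H: "H \<subseteq> L2"
  shows "joint_ap_spectrum H (\<lambda>j. W_chi (\<alpha> $ j)) \<subseteq> closure ((\<lambda>y. \<chi> j. chi (\<alpha> $ j) y) ` UNIV)"
proof
  fix l
  assume "l \<in> joint_ap_spectrum H (\<lambda>j. W_chi (\<alpha> $ j))"
  then obtain x where xL2: "\<And>m. x m \<in> L2" and unit: "\<And>m. L2norm (x m) = 1"
    and lim: "\<And>j. (\<lambda>m. L2norm (\<lambda>y. W_chi (\<alpha> $ j) (x m) y - l $ j * x m y)) \<longlonglongrightarrow> 0"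
    using H unfolding joint_ap_spectrum_def by blast
  show "l \<in> closure ((\<lambda>y. \<chi> j. chi (\<alpha> $ j) y) ` UNIV)"
  proof (rule ccontr)
    assume "l \<notin> closure ((\<lambda>y. \<chi> j. chi (\<alpha> $ j) y) ` UNIV)"
    then obtain e where e: "e > 0" and far: "\<And>y. e \<le> dist (\<chi> j. chi (\<alpha> $ j) y) l"
      unfolding closure_approachable by (auto simp: not_less)
    have defect_lim: "(\<lambda>m. \<Sum>j\<in>UNIV. L2norm (\<lambda>y. W_chi (\<alpha> $ j) (x m) y - l $ j * x m y) ^ 2) \<longlonglongrightarrow> 0"
      using tendsto_sum[of UNIV "\<lambda>j m. L2norm (\<lambda>y. W_chi (\<alpha> $ j) (x m) y - l $ j * x m y) ^ 2"
          "\<lambda>_. 0" sequentially] tendsto_power[OF lim, of _ 2] by simp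
    have "e^2 \<le> (\<Sum>j\<in>UNIV. L2norm (\<lambda>y. W_chi (\<alpha> $ j) (x m) y - l $ j * x m y) ^ 2)" for m
    proof -
      have "e^2 = (\<integral>y. e^2 * (cmod (x m y))^2 \<partial>lborel)"
        using L2norm_sq[of "x m"] unit[of m] by simp
      also have "\<dots> \<le> (\<integral>y. (dist (\<chi> j. chi (\<alpha> $ j) y) l)^2 * (cmod (x m y))^2 \<partial>lborel)"
      proof (rule integral_mono)
        show "integrable lborel (\<lambda>y. e^2 * (cmod (x m y))^2)"
          using L2_D(2)[OF xL2] by simp
        show "integrable lborel (\<lambda>y. (dist (\<chi> j. chi (\<alpha> $ j) y) l)^2 * (cmod (x m y))^2)"
          using mult_defect_sq(1)[OF xL2]
          unfolding dist_norm norm_vec_sq sum_distrib_right by auto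
        show "e^2 * (cmod (x m y))^2 \<le> (dist (\<chi> j. chi (\<alpha> $ j) y) l)^2 * (cmod (x m y))^2" for y
          using far[of y] e by (intro mult_right_mono power_mono) auto
      qed
      finally show ?thesis unfolding joint_defect_energy[OF xL2] .
    qed
    then have "e^2 \<le> 0" by (intro LIMSEQ_le_const[OF defect_lim]) auto
    then show False using e by simp
  qed
qed

section \<open>Every point of the closed range is an approximate joint eigenvalue\<close>

definition cauchy_bump :: "real \<Rightarrow> real \<Rightarrow> real \<Rightarrow> complex" where
  "cauchy_bump m y0 y = complex_of_real (sqrt (m / pi)) * cauchy_kernel (m * (y - y0))"

lemma cauchy_bump_sq:
  assumes "m > 0"
  shows "(cmod (cauchy_bump m y0 y))^2 = (m / pi) * lorentz (m * (y - y0))"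
  unfolding cauchy_bump_def norm_mult power_mult_distrib norm_cauchy_kernel_sq norm_of_real
  using assms by (simp add: real_sqrt_pow2[symmetric])

lemma cauchy_bump_in_H2: "m > 0 \<Longrightarrow> cauchy_bump m y0 \<in> H2"
  unfolding cauchy_bump_def[abs_def] by (rule cauchy_kernel_in_H2)

lemma cauchy_bump_L2: "m > 0 \<Longrightarrow> cauchy_bump m y0 \<in> L2"
  using cauchy_bump_in_H2 unfolding H2_def by blast

lemma cauchy_bump_unit:
  assumes m: "m > 0"
  shows "(\<integral>y. (cmod (cauchy_bump m y0 y))^2 \<partial>lborel) = 1" and "L2norm (cauchy_bump m y0) = 1"
proof -
  have "(\<integral>y. (\<lambda>_. m / pi) (m * (y - y0)) * lorentz (m * (y - y0)) \<partial>lborel)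
      = (1 / m) * (\<integral>u. (m / pi) * lorentz u \<partial>lborel)"
    by (rule lorentz_affine(2)[OF m]) (use lorentz_integrable in simp)
  then show unit: "(\<integral>y. (cmod (cauchy_bump m y0 y))^2 \<partial>lborel) = 1"
    unfolding cauchy_bump_sq[OF m] using m by (simp add: lorentz_integral)
  then show "L2norm (cauchy_bump m y0) = 1" unfolding L2norm_def by simp
qed

lemma cauchy_bump_localization:
  assumes m: "m > 0"
  shows "(\<integral>y. (cmod (chi a y - chi a y0))^2 * (cmod (cauchy_bump m y0 y))^2 \<partial>lborel)
       = (\<integral>u. (cmod (chi a (u / m) - 1))^2 * lorentz u \<partial>lborel) / pi"
proof -
  define h where "h u = (cmod (chi a (y0 + u / m) - chi a y0))^2 * (m / pi)" for u
  have "\<bar>h u\<bar> \<le> 4 * (m / pi)" for u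
  proof -
    have "cmod (chi a (y0 + u / m) - chi a y0) \<le> 2"
      using norm_triangle_ineq4[of "chi a (y0 + u / m)" "chi a y0"] by simp
    then have "(cmod (chi a (y0 + u / m) - chi a y0))^2 \<le> 2^2" by (intro power_mono) auto
    then show ?thesis unfolding h_def using m by (simp add: abs_mult divide_right_mono mult_right_mono)
  qed
  then have hq: "integrable lborel (\<lambda>u. h u * lorentz u)"
    by (intro integrable_bounded_weight[OF lorentz_integrable]) (auto simp: h_def)
  have "(\<lambda>y. (cmod (chi a y - chi a y0))^2 * (cmod (cauchy_bump m y0 y))^2)
      = (\<lambda>y. h (m * (y - y0)) * lorentz (m * (y - y0)))"
  proof
    fix y
    have "y0 + m * (y - y0) / m = y" using m by simp
    then show "(cmod (chi a y - chi a y0))^2 * (cmod (cauchy_bump m y0 y))^2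
        = h (m * (y - y0)) * lorentz (m * (y - y0))"
      unfolding h_def cauchy_bump_sq[OF m] by simp
  qed
  then have "(\<integral>y. (cmod (chi a y - chi a y0))^2 * (cmod (cauchy_bump m y0 y))^2 \<partial>lborel)
      = (1 / m) * (\<integral>u. h u * lorentz u \<partial>lborel)"
    using lorentz_affine(2)[OF m hq] by simp
  also have "(\<lambda>u. h u * lorentz u) = (\<lambda>u. (m / pi) * ((cmod (chi a (u / m) - 1))^2 * lorentz u))"
    unfolding h_def chi_shift by auto
  finally show ?thesis using m by simp
qed

lemma cauchy_bump_defect:
  assumes m: "m > 0"
  shows "L2norm (\<lambda>y. W_chi a (cauchy_bump m y0) y - c * cauchy_bump m y0 y)
       \<le> sqrt (2 * ((\<integral>u. (cmod (chi a (u / m) - 1))^2 * lorentz u \<partial>lborel) / pi)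
               + 2 * (cmod (chi a y0 - c))^2)"
proof -
  define x where "x = cauchy_bump m y0"
  have xL2: "x \<in> L2" unfolding x_def by (rule cauchy_bump_L2[OF m])
  note [measurable] = L2_D(1)[OF xL2]
  have xi: "integrable lborel (\<lambda>y. (cmod (x y))^2)" by (rule L2_D(2)[OF xL2])
  have "L2norm (\<lambda>y. W_chi a x y - c * x y) ^ 2 = (\<integral>y. (cmod (chi a y - c))^2 * (cmod (x y))^2 \<partial>lborel)"
    by (rule mult_defect_sq(2)[OF xL2])
  also have "\<dots> \<le> (\<integral>y. 2 * ((cmod (chi a y - chi a y0))^2 * (cmod (x y))^2)
                     + 2 * (cmod (chi a y0 - c))^2 * (cmod (x y))^2 \<partial>lborel)"
  proof (rule integral_mono)
    show "integrable lborel (\<lambda>y. (cmod (chi a y - c))^2 * (cmod (x y))^2)"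
      by (rule mult_defect_sq(1)[OF xL2])
    show "integrable lborel (\<lambda>y. 2 * ((cmod (chi a y - chi a y0))^2 * (cmod (x y))^2)
        + 2 * (cmod (chi a y0 - c))^2 * (cmod (x y))^2)"
      using mult_defect_sq(1)[OF xL2, of a "chi a y0"] xi by auto
    show "(cmod (chi a y - c))^2 * (cmod (x y))^2
        \<le> 2 * ((cmod (chi a y - chi a y0))^2 * (cmod (x y))^2) + 2 * (cmod (chi a y0 - c))^2 * (cmod (x y))^2" for y
      using mult_right_mono[OF norm_diff_sq_le[of "chi a y" c "chi a y0"], of "(cmod (x y))^2"]
      by (simp add: algebra_simps)
  qed
  also have "\<dots> = 2 * (\<integral>y. (cmod (chi a y - chi a y0))^2 * (cmod (x y))^2 \<partial>lborel)
                 + 2 * (cmod (chi a y0 - c))^2 * (\<integral>y. (cmod (x y))^2 \<partial>lborel)"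
    using mult_defect_sq(1)[OF xL2, of a "chi a y0"] xi by simp
  also have "\<dots> = 2 * ((\<integral>u. (cmod (chi a (u / m) - 1))^2 * lorentz u \<partial>lborel) / pi)
                 + 2 * (cmod (chi a y0 - c))^2"
    unfolding x_def cauchy_bump_unit(1)[OF m] cauchy_bump_localization[OF m] by simp
  finally show ?thesis unfolding x_def by (rule real_le_rsqrt)
qed

lemma localization_term_tendsto:
  "(\<lambda>n. \<integral>u. (cmod (chi a (u / real (Suc n)) - 1))^2 * lorentz u \<partial>lborel) \<longlonglongrightarrow> 0"
proof -
  have pointwise: "AE u in lborel. (\<lambda>n. (cmod (chi a (u / real (Suc n)) - 1))^2 * lorentz u) \<longlonglongrightarrow> 0"
  proof (rule AE_I2)
    fix u
    have "(\<lambda>n. u / real (Suc n)) \<longlonglongrightarrow> 0"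
      using tendsto_mult[OF tendsto_const[of u] LIMSEQ_inverse_real_of_nat] by (simp add: divide_inverse)
    then have "(\<lambda>n. chi a (u / real (Suc n))) \<longlonglongrightarrow> chi a 0"
      by (rule isCont_tendsto_compose[OF chi_isCont])
    then have "(\<lambda>n. (cmod (chi a (u / real (Suc n)) - 1))^2 * lorentz u) \<longlonglongrightarrow> (cmod (chi a 0 - 1))^2 * lorentz u"
      by (intro tendsto_intros)
    then show "(\<lambda>n. (cmod (chi a (u / real (Suc n)) - 1))^2 * lorentz u) \<longlonglongrightarrow> 0"
      by (simp add: chi_zero)
  qed
  have dominated: "AE u in lborel. norm ((cmod (chi a (u / real (Suc n)) - 1))^2 * lorentz u) \<le> 4 * lorentz u" for n
  proof (rule AE_I2)
    fix u
    have "cmod (chi a (u / real (Suc n)) - 1) \<le> 2"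
      using norm_triangle_ineq4[of "chi a (u / real (Suc n))" 1] by simp
    then have "(cmod (chi a (u / real (Suc n)) - 1))^2 \<le> 2^2" by (intro power_mono) auto
    then show "norm ((cmod (chi a (u / real (Suc n)) - 1))^2 * lorentz u) \<le> 4 * lorentz u"
      using lorentz_pos[of u] by (simp add: abs_mult mult_right_mono)
  qed
  have "(\<lambda>u. (cmod (chi a (u / real (Suc n)) - 1))^2 * lorentz u) \<in> borel_measurable lborel" for n
    by measurable
  moreover have "integrable lborel (\<lambda>u. 4 * lorentz u)" using lorentz_integrable by simp
  ultimately show ?thesis
    using integral_dominated_convergence[OF borel_measurable_const _ _ pointwise dominated] by simp
qed

lemma closure_subset_ap_spectrum:
  fixes \<alpha> :: "real ^ 'n"
  shows "closure ((\<lambda>y. \<chi> j. chi (\<alpha> $ j) y) ` UNIV) \<subseteq> joint_ap_spectrum H2 (\<lambda>j. W_chi (\<alpha> $ j))"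
proof
  fix l
  assume "l \<in> closure ((\<lambda>y. \<chi> j. chi (\<alpha> $ j) y) ` UNIV)"
  then have "\<forall>n. \<exists>y. dist (\<chi> j. chi (\<alpha> $ j) y) l < 1 / real (Suc n)"
    unfolding closure_approachable by (metis (no_types, lifting) dist_commute imageE of_nat_0_less_iff zero_less_Suc divide_pos_pos zero_less_one)
  then obtain yy where yy: "\<And>n. dist (\<chi> j. chi (\<alpha> $ j) (yy n)) l < 1 / real (Suc n)" by metis
  define x where "x n = cauchy_bump (real (Suc n)) (yy n)" for n
  have "(\<lambda>n. L2norm (\<lambda>y. W_chi (\<alpha> $ j) (x n) y - l $ j * x n y)) \<longlonglongrightarrow> 0" for j
  proof (rule Lim_null_comparison)
    define R where "R n = (\<integral>u. (cmod (chi (\<alpha> $ j) (u / real (Suc n)) - 1))^2 * lorentz u \<partial>lborel)" for n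
    have close: "cmod (chi (\<alpha> $ j) (yy n) - l $ j) \<le> 1 / real (Suc n)" for n
    proof -
      have "cmod (chi (\<alpha> $ j) (yy n) - l $ j) = norm (((\<chi> j. chi (\<alpha> $ j) (yy n)) - l) $ j)" by simp
      also have "\<dots> \<le> norm ((\<chi> j. chi (\<alpha> $ j) (yy n)) - l)" by (rule Finite_Cartesian_Product.norm_nth_le)
      also have "\<dots> < 1 / real (Suc n)" using yy[of n] by (simp add: dist_norm)
      finally show ?thesis by simp
    qed
    show "\<forall>\<^sub>F n in sequentially. norm (L2norm (\<lambda>y. W_chi (\<alpha> $ j) (x n) y - l $ j * x n y))
        \<le> sqrt (2 * (R n / pi) + 2 * (1 / real (Suc n))^2)"
    proof (intro always_eventually allI)
      fix n
      have "L2norm (\<lambda>y. W_chi (\<alpha> $ j) (x n) y - l $ j * x n y)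
          \<le> sqrt (2 * (R n / pi) + 2 * (cmod (chi (\<alpha> $ j) (yy n) - l $ j))^2)"
        unfolding x_def R_def by (rule cauchy_bump_defect) simp
      also have "\<dots> \<le> sqrt (2 * (R n / pi) + 2 * (1 / real (Suc n))^2)"
        using close[of n] by (simp add: power_mono)
      finally show "norm (L2norm (\<lambda>y. W_chi (\<alpha> $ j) (x n) y - l $ j * x n y))
          \<le> sqrt (2 * (R n / pi) + 2 * (1 / real (Suc n))^2)"
        unfolding L2norm_def by simp
    qed
    have "(\<lambda>n. sqrt (2 * (R n / pi) + 2 * (1 / real (Suc n))^2)) \<longlonglongrightarrow> sqrt (2 * (0 / pi) + 2 * 0^2)"
      unfolding R_def
      by (intro tendsto_intros localization_term_tendsto LIMSEQ_inverse_real_of_nat[unfolded inverse_eq_divide]) simp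
    then show "(\<lambda>n. sqrt (2 * (R n / pi) + 2 * (1 / real (Suc n))^2)) \<longlonglongrightarrow> 0" by simp
  qed
  moreover have "x n \<in> H2 \<and> L2norm (x n) = 1" for n
    unfolding x_def using cauchy_bump_in_H2 cauchy_bump_unit(2) by simp
  ultimately show "l \<in> joint_ap_spectrum H2 (\<lambda>j. W_chi (\<alpha> $ j))"
    unfolding joint_ap_spectrum_def by blast
qed

theorem mainTheorem15:
  fixes \<alpha> :: "real ^ 'n"
  assumes "\<forall>j. \<alpha> $ j > 0"
    and "inj (\<lambda>j. \<alpha> $ j)"
  shows "joint_ap_spectrum H2 (\<lambda>j. W_chi (\<alpha> $ j))
         = closure ((\<lambda>y. \<chi> j. chi (\<alpha> $ j) y) ` UNIV)"
proof (rule subset_antisym)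
  have "H2 \<subseteq> L2" unfolding H2_def by blast
  then show "joint_ap_spectrum H2 (\<lambda>j. W_chi (\<alpha> $ j)) \<subseteq> closure ((\<lambda>y. \<chi> j. chi (\<alpha> $ j) y) ` UNIV)"
    by (rule ap_spectrum_subset_closure)
  show "closure ((\<lambda>y. \<chi> j. chi (\<alpha> $ j) y) ` UNIV) \<subseteq> joint_ap_spectrum H2 (\<lambda>j. W_chi (\<alpha> $ j))"
    by (rule closure_subset_ap_spectrum)
qed

end
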